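(* Let $G_1$ be an $r_1$-regular graph with $r_1\ge 1$ on $n_1$ vertices and $m_1$ edges, and let $G_2$ be an $r_2$-regular graph with $r_2\ge1$ on $n_2$ vertices. Let $0=\mu_1,\mu_2,\ldots,\mu_{n_1}$ be the normalized Laplacian eigenvalues of $G_1$ and $0=\nu_1,\nu_2,\ldots,\nu_{n_2}$ those of $G_2$ (listed with multiplicity). Then the normalized Laplacian spectrum (as a multiset) of the subdivision-vertex join $G_1\dot{\vee}G_2$ consists of: (i) $0$; (ii) $1$, with multiplicity $m_1-n_1$; (iii) $\dfrac{n_1+r_2\nu_i}{r_2+n_1}$ for $i=2,\ldots,n_2$; (iv) for each $i=2,\ldots,n_1$, the two roots of $(x-1)^2-\dfrac{r_1(2-\mu_i)}{2(r_1+n_2)}=0$; (v) the two roots of $x^2-\left(2+\dfrac{n_1}{r_2+n_1}\right)x+\dfrac{2n_1}{r_2+n_1}+\dfrac{n_2r_2}{(r_1+n_2)(r_2+n_1)}=0$. (If $m_1<n_1$, which can only happen when $r_1=1$, item (ii) means that $n_1-m_1$ copies of $1$ are removed from the multiset formed by items (i), (iii), (iv), (v).) Equivalently, the characteristic polynomial of $\mathcal{L}(G_1\dot{\vee}G_2)$ equals $$x(x-1)^{m_1-n_1}\left(x^2-\left(2+\tfrac{n_1}{r_2+n_1}\right)x+\tfrac{2n_1}{r_2+n_1}+\tfrac{n_2r_2}{(r_1+n_2)(r_2+n_1)}\right)\prod_{i=2}^{n_1}\left((x-1)^2-\tfrac{r_1(2-\mu_i)}{2(r_1+n_2)}\right)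\prod_{i=2}^{n_2}\left(x-\tfrac{n_1+r_2\nu_i}{r_2+n_1}\right).$$
   Context: All graphs are finite and simple. For a graph $G$ without isolated vertices, with adjacency matrix $A(G)$ and diagonal degree matrix $D(G)$, the normalized Laplacian matrix is $\mathcal{L}(G)=I-D(G)^{-1/2}A(G)D(G)^{-1/2}$; its eigenvalues (with multiplicity) form the normalized Laplacian spectrum of $G$. The subdivision graph $S(G)$ of $G$ is obtained by inserting a new vertex into every edge of $G$; the set of these new vertices is denoted $I(G)$. The subdivision-vertex join $G_1\dot{\vee}G_2$ of graphs $G_1,G_2$ is the graph obtained from $S(G_1)$ and (a disjoint copy of) $G_2$ by joining each vertex of $V(G_1)$ with every vertex of $V(G_2)$. *)

theory Defs
  imports "Jordan_Normal_Form.Char_Poly" "HOL.Real"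
begin

definition simple_graph :: "'a set \<Rightarrow> 'a set set \<Rightarrow> bool" where
  "simple_graph V E \<longleftrightarrow> finite V \<and> (\<forall>e\<in>E. \<exists>u v. u \<noteq> v \<and> e = {u, v} \<and> u \<in> V \<and> v \<in> V)"

definition degree :: "'a set \<Rightarrow> 'a set set \<Rightarrow> 'a \<Rightarrow> nat" where
  "degree V E v = card {u \<in> V. {u, v} \<in> E}"

definition regular :: "'a set \<Rightarrow> 'a set set \<Rightarrow> nat \<Rightarrow> bool" where
  "regular V E r \<longleftrightarrow> (\<forall>v\<in>V. degree V E v = r)"

text \<open>A fixed enumeration of the (finite) vertex set; the characteristic
  polynomial of the normalized Laplacian does not depend on this choice.\<close>

definition vertex_list :: "'a set \<Rightarrow> 'a list" where
  "vertex_list V = (SOME xs. distinct xs \<and> set xs = V)"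

definition norm_laplacian :: "'a set \<Rightarrow> 'a set set \<Rightarrow> real mat" where
  "norm_laplacian V E =
    (let xs = vertex_list V in
     mat (length xs) (length xs)
       (\<lambda>(i, j). (if i = j then 1 else 0)
          - (if {xs ! i, xs ! j} \<in> E \<and> xs ! i \<noteq> xs ! j then 1 else 0)
            / sqrt (real (degree V E (xs ! i)) * real (degree V E (xs ! j)))))"

text \<open>Subdivision-vertex join. Vertices: Inl (Inl v) for v in V(G1),
  Inl (Inr e) for the subdivision vertex of edge e of G1, Inr w for w in V(G2).\<close>

definition svj_vertices :: "'a set \<Rightarrow> 'a set set \<Rightarrow> 'b set \<Rightarrow> (('a + 'a set) + 'b) set" where
  "svj_vertices V1 E1 V2 = (Inl \<circ> Inl) ` V1 \<union> (Inl \<circ> Inr) ` E1 \<union> Inr ` V2"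

definition svj_edges :: "'a set \<Rightarrow> 'a set set \<Rightarrow> 'b set \<Rightarrow> 'b set set \<Rightarrow> (('a + 'a set) + 'b) set set" where
  "svj_edges V1 E1 V2 E2 =
     {{Inl (Inl v), Inl (Inr e)} | v e. e \<in> E1 \<and> v \<in> e}
   \<union> {{Inr x, Inr y} | x y. {x, y} \<in> E2}
   \<union> {{Inl (Inl v), Inr w} | v w. v \<in> V1 \<and> w \<in> V2}"

end

theory Submission
  imports Defs
begin

text \<open>Order the vertices of the join as subdivision vertices, \<open>V1\<close>, \<open>V2\<close>. In \<open>x I - L\<close> the
  subdivision block is \<open>(x - 1) I\<close>, so a Schur complement removes it at the cost of a factor
  \<open>(x - 1)^m1\<close>. Since \<open>R R\<^sup>T = A1 + r1 I\<close> for the incidence matrix \<open>R\<close> of the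
  \<open>r1\<close>-regular \<open>G1\<close>, what remains is the block matrix
  \<open>[[\<sigma> I + \<alpha> L1, c J], [c J, \<tau> I + \<beta> L2]]\<close> with all-ones blocks \<open>J\<close> and
  \<open>c = 1 / sqrt (d1 d2)\<close>, \<open>d1\<close> and \<open>d2\<close> being the degrees in the join. The all-ones vectors
  lie in the kernels of \<open>L1\<close> and \<open>L2\<close>, so one more Schur complement and a rank-one update give
  \<open>det (\<sigma> I + \<alpha> L1) (1 - n1 n2 c\<^sup>2 / (\<sigma> \<tau>)) det (\<tau> I + \<beta> L2)\<close>, and the two
  determinants factor over the spectra \<open>\<mu>\<close> and \<open>\<nu>\<close>. Both sides of the theorem are
  polynomials, so it suffices to compare them at every \<open>x > 2\<close>, where all the pivots are nonzero.\<close>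

section \<open>Matrices indexed by lists\<close>

lemma det_permute_rows_cols:
  assumes A: "(A :: 'a :: comm_ring_1 mat) \<in> carrier_mat n n" and p: "p permutes {0..<n}"
  shows "det (mat n n (\<lambda>(i, j). A $$ (p i, p j))) = det A"
proof -
  define B where "B = mat n n (\<lambda>(i, j). A $$ (i, p j))"
  have B: "B \<in> carrier_mat n n" unfolding B_def by simp
  have p_less: "i < n \<Longrightarrow> p i < n" for i using p permutes_in_image by fastforce
  have "mat n n (\<lambda>(i, j). A $$ (p i, p j)) = mat n n (\<lambda>(i, j). B $$ (p i, j))"
    by (rule eq_matI) (auto simp: B_def p_less)
  hence rows: "det (mat n n (\<lambda>(i, j). A $$ (p i, p j))) = of_int (sign p) * det B"
    using det_permute_rows[OF B p] by simp
  have "transpose_mat B = mat n n (\<lambda>(i, j). transpose_mat A $$ (p i, j))"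
    by (rule eq_matI) (use A in \<open>auto simp: B_def p_less\<close>)
  hence cols: "det B = of_int (sign p) * det A"
    using det_permute_rows[of "transpose_mat A" n p] A p det_transpose[OF B] det_transpose[OF A]
    by auto
  have "sign p * sign p = (1 :: int)" by (simp add: sign_def)
  hence "of_int (sign p) * of_int (sign p) = (1 :: 'a)" by (metis of_int_1 of_int_mult)
  thus ?thesis using rows cols by (simp add: mult.assoc[symmetric])
qed

definition enum_mat :: "'v list \<Rightarrow> 'w list \<Rightarrow> ('v \<Rightarrow> 'w \<Rightarrow> 'a) \<Rightarrow> 'a mat" where
  "enum_mat xs ys f = mat (length xs) (length ys) (\<lambda>(i, j). f (xs ! i) (ys ! j))"

lemma enum_mat_carrier [simp]: "enum_mat xs ys f \<in> carrier_mat (length xs) (length ys)"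
  and dim_row_enum_mat [simp]: "dim_row (enum_mat xs ys f) = length xs"
  and dim_col_enum_mat [simp]: "dim_col (enum_mat xs ys f) = length ys"
  by (simp_all add: enum_mat_def)

lemma index_enum_mat [simp]:
  "i < length xs \<Longrightarrow> j < length ys \<Longrightarrow> enum_mat xs ys f $$ (i, j) = f (xs ! i) (ys ! j)"
  by (simp add: enum_mat_def)

lemma enum_mat_map_rows: "enum_mat (map g xs) ys f = enum_mat xs ys (\<lambda>a. f (g a))"
  by (rule eq_matI) simp_all

lemma enum_mat_map_cols: "enum_mat xs (map h ys) f = enum_mat xs ys (\<lambda>a b. f a (h b))"
  by (rule eq_matI) simp_all

lemma enum_mat_const:
  assumes "\<And>a b. a \<in> set xs \<Longrightarrow> b \<in> set ys \<Longrightarrow> f a b = c"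
  shows "enum_mat xs ys f = mat (length xs) (length ys) (\<lambda>_. c)"
  by (rule eq_matI) (use assms in simp_all)

lemma enum_mat_append:
  "enum_mat (xs @ xs') (ys @ ys') f =
     four_block_mat (enum_mat xs ys f) (enum_mat xs ys' f) (enum_mat xs' ys f) (enum_mat xs' ys' f)"
  by (rule eq_matI) (auto simp: nth_append)

lemma enum_mat_mult:
  assumes "distinct ys"
  shows "enum_mat xs ys f * enum_mat ys zs g = enum_mat xs zs (\<lambda>a c. \<Sum>b\<in>set ys. f a b * g b c)"
proof (rule eq_matI)
  fix i j assume "i < dim_row (enum_mat xs zs (\<lambda>a c. \<Sum>b\<in>set ys. f a b * g b c))"
    "j < dim_col (enum_mat xs zs (\<lambda>a c. \<Sum>b\<in>set ys. f a b * g b c))"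
  thus "(enum_mat xs ys f * enum_mat ys zs g) $$ (i, j) =
      enum_mat xs zs (\<lambda>a c. \<Sum>b\<in>set ys. f a b * g b c) $$ (i, j)"
    using sum_list_distinct_conv_sum_set[OF assms, of "\<lambda>b. f (xs ! i) b * g b (zs ! j)"]
    by (simp add: scalar_prod_def sum_list_sum_nth atLeast0LessThan)
qed simp_all

lemma enum_mat_diag:
  fixes a :: "'a :: semiring_1"
  assumes "distinct xs" and "\<And>u v. u \<in> set xs \<Longrightarrow> v \<in> set xs \<Longrightarrow> f u v = (if u = v then a else 0)"
  shows "enum_mat xs xs f = a \<cdot>\<^sub>m 1\<^sub>m (length xs)"
  by (rule eq_matI) (use assms in \<open>auto simp: nth_eq_iff_index_eq\<close>)

lemma enum_mat_diff_smult:
  "enum_mat xs ys f - c \<cdot>\<^sub>m enum_mat xs ys g = enum_mat xs ys (\<lambda>a b. f a b - c * g a b)"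
  by (rule eq_matI) simp_all

lemma enum_mat_affine:
  fixes a b :: "'a :: semiring_1"
  assumes "distinct xs" and "\<And>u v. u \<in> set xs \<Longrightarrow> v \<in> set xs \<Longrightarrow> f u v = (if u = v then a else 0) + b * g u v"
  shows "enum_mat xs xs f = a \<cdot>\<^sub>m 1\<^sub>m (length xs) + b \<cdot>\<^sub>m enum_mat xs xs g"
  by (rule eq_matI) (use assms in \<open>auto simp: nth_eq_iff_index_eq\<close>)

lemma det_enum_mat_reindex:
  assumes "distinct xs" and "distinct ys" and "set xs = set ys"
  shows "det (enum_mat xs xs f) = det (enum_mat ys ys f)"
proof -
  have "mset xs = mset ys" using assms set_eq_iff_mset_eq_distinct by blast
  then obtain p where p: "p permutes {..<length ys}" and xs: "permute_list p ys = xs"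
    by (rule mset_eq_permutation)
  let ?n = "length ys"
  have p_less: "i < ?n \<Longrightarrow> p i < ?n" for i using p permutes_in_image by fastforce
  have len: "length xs = ?n" using xs length_permute_list by metis
  have "enum_mat xs xs f = mat ?n ?n (\<lambda>(i, j). enum_mat ys ys f $$ (p i, p j))"
    by (rule eq_matI) (auto simp: len p_less permute_list_nth[OF p] xs[symmetric])
  thus ?thesis using det_permute_rows_cols[of "enum_mat ys ys f" ?n p] p
    by (simp add: lessThan_atLeast0)
qed

section \<open>Block determinants and characteristic polynomials\<close>

lemma det_four_block_mat_elim_right:
  fixes A :: "'a :: idom mat"
  assumes A: "A \<in> carrier_mat n n" and B: "B \<in> carrier_mat n k" and C: "C \<in> carrier_mat k n"
    and D: "D \<in> carrier_mat k k" and X: "X \<in> carrier_mat n k" and elim: "A * X + B = 0\<^sub>m n k"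
  shows "det (four_block_mat A B C D) = det A * det (C * X + D)"
proof -
  let ?U = "four_block_mat (1\<^sub>m n) X (0\<^sub>m k n) (1\<^sub>m k)"
  have U: "?U \<in> carrier_mat (n + k) (n + k)" using X by simp
  have "four_block_mat A B C D * ?U = four_block_mat A (A * X + B) C (C * X + D)"
    by (subst mult_four_block_mat[OF A B C D one_carrier_mat X zero_carrier_mat one_carrier_mat])
      (use A B C D X in simp)
  moreover have "det ?U = 1"
    using X by (simp add: det_four_block_mat_lower_left_zero[of _ n _ k])
  moreover have "det (four_block_mat A (0\<^sub>m n k) C (C * X + D)) = det A * det (C * X + D)"
    using A C D X by (simp add: det_four_block_mat_upper_right_zero[of _ n _ k])
  ultimately show ?thesis using det_mult[OF _ U, of "four_block_mat A B C D"] A B C D elim by simp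
qed

lemma det_four_block_mat_elim_left:
  fixes A :: "'a :: idom mat"
  assumes A: "A \<in> carrier_mat n n" and B: "B \<in> carrier_mat n k" and C: "C \<in> carrier_mat k n"
    and D: "D \<in> carrier_mat k k" and Y: "Y \<in> carrier_mat k n" and elim: "C + D * Y = 0\<^sub>m k n"
  shows "det (four_block_mat A B C D) = det (A + B * Y) * det D"
proof -
  let ?U = "four_block_mat (1\<^sub>m n) (0\<^sub>m n k) Y (1\<^sub>m k)"
  have U: "?U \<in> carrier_mat (n + k) (n + k)" using Y by simp
  have "four_block_mat A B C D * ?U = four_block_mat (A + B * Y) B (C + D * Y) D"
    by (subst mult_four_block_mat[OF A B C D one_carrier_mat zero_carrier_mat Y one_carrier_mat])
      (use A B C D Y in simp)
  moreover have "det ?U = 1"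
    using Y by (simp add: det_four_block_mat_upper_right_zero[of _ n _ k])
  moreover have "det (four_block_mat (A + B * Y) B (0\<^sub>m k n) D) = det (A + B * Y) * det D"
    using A B D Y by (simp add: det_four_block_mat_lower_left_zero[of _ n _ k])
  ultimately show ?thesis using det_mult[OF _ U, of "four_block_mat A B C D"] A B C D elim by simp
qed

text \<open>A Schur complement that needs no inverse of \<open>A\<close>: the columns of \<open>B\<close> are eigenvectors of \<open>A\<close>.\<close>

lemma det_four_block_mat_eigen:
  fixes A :: "'a :: field mat"
  assumes A: "A \<in> carrier_mat n n" and B: "B \<in> carrier_mat n k" and C: "C \<in> carrier_mat k n"
    and D: "D \<in> carrier_mat k k" and AB: "A * B = s \<cdot>\<^sub>m B" and s: "s \<noteq> 0"
  shows "det (four_block_mat A B C D) = det A * det (D - (1 / s) \<cdot>\<^sub>m (C * B))"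
proof -
  have elim: "A * (- (1 / s) \<cdot>\<^sub>m B) + B = 0\<^sub>m n k"
    unfolding mult_smult_distrib[OF A B] AB by (rule eq_matI) (use B s in auto)
  have "C * (- (1 / s) \<cdot>\<^sub>m B) + D = D - (1 / s) \<cdot>\<^sub>m (C * B)"
    unfolding mult_smult_distrib[OF C B] by (rule eq_matI) (use B C D in auto)
  thus ?thesis using det_four_block_mat_elim_right[OF A B C D _ elim] B by simp
qed

lemma det_minus_rank_one:
  fixes Q :: "'a :: field mat"
  assumes Q: "Q \<in> carrier_mat n n" and u: "u \<in> carrier_mat n 1" and w: "w \<in> carrier_mat 1 n"
    and Qu: "Q * u = t \<cdot>\<^sub>m u" and t: "t \<noteq> 0"
  shows "det (Q - u * w) = (1 - (w * u) $$ (0, 0) / t) * det Q"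
proof -
  let ?M = "four_block_mat (1\<^sub>m 1) w u Q"
  \<comment> \<open>eliminating either off-diagonal block of \<open>?M\<close> computes its determinant\<close>
  have "- (u * w) + Q = Q - u * w" by (rule eq_matI) (use Q u w in auto)
  hence upper: "det ?M = det (Q - u * w)"
    using det_four_block_mat_elim_right[OF one_carrier_mat w u Q, of "- w"] Q u w by simp
  have "u + Q * (- (1 / t) \<cdot>\<^sub>m u) = 0\<^sub>m n 1"
    unfolding mult_smult_distrib[OF Q u] Qu by (rule eq_matI) (use u t in auto)
  moreover have "1\<^sub>m 1 + w * (- (1 / t) \<cdot>\<^sub>m u) = 1\<^sub>m 1 - (1 / t) \<cdot>\<^sub>m (w * u)"
    unfolding mult_smult_distrib[OF w u] by (rule eq_matI) (use u w in auto)
  ultimately have "det ?M = det (1\<^sub>m 1 - (1 / t) \<cdot>\<^sub>m (w * u)) * det Q"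
    using det_four_block_mat_elim_left[OF one_carrier_mat w u Q, of "- (1 / t) \<cdot>\<^sub>m u"] u by simp
  moreover have "det (1\<^sub>m 1 - (1 / t) \<cdot>\<^sub>m (w * u)) = 1 - (w * u) $$ (0, 0) / t"
    using u w by (subst det_single) auto
  ultimately show ?thesis using upper by simp
qed

lemma affine_mat_mult_kernel:
  fixes L :: "'a :: comm_ring_1 mat"
  assumes L: "L \<in> carrier_mat n n" and B: "B \<in> carrier_mat n k" and LB: "L * B = 0\<^sub>m n k"
  shows "(s \<cdot>\<^sub>m 1\<^sub>m n + a \<cdot>\<^sub>m L) * B = s \<cdot>\<^sub>m B"
proof -
  have "(s \<cdot>\<^sub>m 1\<^sub>m n + a \<cdot>\<^sub>m L) * B = (s \<cdot>\<^sub>m 1\<^sub>m n) * B + (a \<cdot>\<^sub>m L) * B"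
    by (rule add_mult_distrib_mat) (use L B in auto)
  also have "\<dots> = s \<cdot>\<^sub>m B + a \<cdot>\<^sub>m (L * B)"
    using L B by (simp add: mult_smult_assoc_mat[of _ n n])
  also have "\<dots> = s \<cdot>\<^sub>m B"
    unfolding LB by (rule eq_matI) (use B in auto)
  finally show ?thesis .
qed

lemma det_four_block_mat_const_off_diagonal:
  fixes L1 L2 :: "'a :: field mat"
  assumes L1: "L1 \<in> carrier_mat n1 n1" and L2: "L2 \<in> carrier_mat n2 n2"
    and L1_const: "L1 * mat n1 n2 (\<lambda>_. c) = 0\<^sub>m n1 n2" and L2_ones: "L2 * mat n2 1 (\<lambda>_. 1) = 0\<^sub>m n2 1"
    and s: "s \<noteq> 0" and t: "t \<noteq> 0"
  shows "det (four_block_mat (s \<cdot>\<^sub>m 1\<^sub>m n1 + a \<cdot>\<^sub>m L1) (mat n1 n2 (\<lambda>_. c)) (mat n2 n1 (\<lambda>_. c))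
      (t \<cdot>\<^sub>m 1\<^sub>m n2 + b \<cdot>\<^sub>m L2))
    = det (s \<cdot>\<^sub>m 1\<^sub>m n1 + a \<cdot>\<^sub>m L1) * (1 - of_nat n1 * of_nat n2 * c ^ 2 / (s * t))
      * det (t \<cdot>\<^sub>m 1\<^sub>m n2 + b \<cdot>\<^sub>m L2)"
proof -
  let ?P = "s \<cdot>\<^sub>m 1\<^sub>m n1 + a \<cdot>\<^sub>m L1" and ?Q = "t \<cdot>\<^sub>m 1\<^sub>m n2 + b \<cdot>\<^sub>m L2"
  let ?B = "mat n1 n2 (\<lambda>_. c)" and ?C = "mat n2 n1 (\<lambda>_. c)"
  let ?u = "mat n2 1 (\<lambda>_. 1)" and ?w = "mat 1 n2 (\<lambda>_. of_nat n1 * c ^ 2 / s)"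
  have "?P * ?B = s \<cdot>\<^sub>m ?B"
    using L1 L1_const by (intro affine_mat_mult_kernel) auto
  hence "det (four_block_mat ?P ?B ?C ?Q) = det ?P * det (?Q - (1 / s) \<cdot>\<^sub>m (?C * ?B))"
    using L1 L2 s by (intro det_four_block_mat_eigen) auto
  also have "(1 / s) \<cdot>\<^sub>m (?C * ?B) = ?u * ?w"
    by (rule eq_matI) (auto simp: scalar_prod_def power2_eq_square)
  also have "det (?Q - ?u * ?w) = (1 - (?w * ?u) $$ (0, 0) / t) * det ?Q"
    using L2 t L2_ones by (intro det_minus_rank_one affine_mat_mult_kernel) auto
  also have "(?w * ?u) $$ (0, 0) = of_nat n1 * of_nat n2 * c ^ 2 / s"
    by (simp add: scalar_prod_def)
  finally show ?thesis by (simp add: field_simps)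
qed

lemma poly_char_poly_det:
  assumes "(A :: 'a :: field mat) \<in> carrier_mat n n"
  shows "poly (char_poly A) x = det (x \<cdot>\<^sub>m 1\<^sub>m n - A)"
proof -
  have "- char_matrix A x = x \<cdot>\<^sub>m 1\<^sub>m n - A"
    by (rule eq_matI) (use assms in \<open>auto simp: char_matrix_def\<close>)
  thus ?thesis using char_poly_matrix[OF assms] by simp
qed

lemma det_affine_char_poly:
  fixes L :: "'a :: field mat"
  assumes L: "L \<in> carrier_mat n n" and cp: "char_poly L = (\<Prod>i<n. [:- \<mu> i, 1:])" and b: "b \<noteq> 0"
  shows "det (a \<cdot>\<^sub>m 1\<^sub>m n + b \<cdot>\<^sub>m L) = (\<Prod>i<n. a + b * \<mu> i)"
proof -
  have "a \<cdot>\<^sub>m 1\<^sub>m n + b \<cdot>\<^sub>m L = (- b) \<cdot>\<^sub>m ((- a / b) \<cdot>\<^sub>m 1\<^sub>m n - L)"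
    by (rule eq_matI) (use L b in \<open>auto simp: field_simps\<close>)
  hence "det (a \<cdot>\<^sub>m 1\<^sub>m n + b \<cdot>\<^sub>m L) = (- b) ^ n * poly (char_poly L) (- a / b)"
    using poly_char_poly_det[OF L] L by simp
  also have "poly (char_poly L) (- a / b) = (\<Prod>i<n. - a / b - \<mu> i)"
    unfolding cp poly_prod by (intro prod.cong) auto
  also have "(- b) ^ n * \<dots> = (\<Prod>i<n. - b) * (\<Prod>i<n. - a / b - \<mu> i)"
    by simp
  also have "\<dots> = (\<Prod>i<n. (- b) * (- a / b - \<mu> i))"
    by (rule prod.distrib[symmetric])
  also have "\<dots> = (\<Prod>i<n. a + b * \<mu> i)"
    using b by (intro prod.cong) (auto simp: field_simps)
  finally show ?thesis .
qed

lemma poly_eqI_greater: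
  fixes p q :: "real poly"
  assumes "\<And>x. x > c \<Longrightarrow> poly p x = poly q x"
  shows "p = q"
proof (rule ccontr)
  assume "p \<noteq> q"
  hence "finite {x. poly (p - q) x = 0}" by (intro poly_roots_finite) simp
  moreover have "{c<..} \<subseteq> {x. poly (p - q) x = 0}" using assms by auto
  ultimately show False using infinite_Ioi finite_subset by blast
qed

section \<open>Normalized Laplacians of regular graphs\<close>

lemma simple_graph_finite: "simple_graph V E \<Longrightarrow> finite V"
  by (simp add: simple_graph_def)

lemma simple_graph_edgeE:
  assumes "simple_graph V E" and "e \<in> E"
  obtains u v where "u \<noteq> v" and "e = {u, v}" and "u \<in> V" and "v \<in> V"
  using assms by (auto simp: simple_graph_def)

lemma simple_graph_finite_edges:
  assumes "simple_graph V E" shows "finite E"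
proof (rule finite_subset)
  show "E \<subseteq> Pow V" using assms by (auto elim: simple_graph_edgeE)
qed (use simple_graph_finite[OF assms] in simp)

lemma simple_graph_loop_free: "simple_graph V E \<Longrightarrow> {u} \<notin> E"
  by (auto elim: simple_graph_edgeE simp: doubleton_eq_iff)

lemma card_incident_edges:
  assumes G: "simple_graph V E"
  shows "card {e \<in> E. u \<in> e} = degree V E u"
proof -
  have "{e \<in> E. u \<in> e} = (\<lambda>v. {v, u}) ` {v \<in> V. {v, u} \<in> E}"
  proof (intro equalityI subsetI)
    fix e assume "e \<in> {e \<in> E. u \<in> e}"
    then obtain a b where "e \<in> E" "e = {a, b}" "a \<in> V" "b \<in> V" "u \<in> e"
      using G by (auto elim: simple_graph_edgeE)
    thus "e \<in> (\<lambda>v. {v, u}) ` {v \<in> V. {v, u} \<in> E}" by (auto simp: insert_commute)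
  qed auto
  moreover have "inj_on (\<lambda>v. {v, u}) {v \<in> V. {v, u} \<in> E}"
    using simple_graph_loop_free[OF G] by (intro inj_onI) (auto simp: doubleton_eq_iff)
  ultimately show ?thesis by (simp add: card_image degree_def)
qed

lemma card_common_edges:
  assumes G: "simple_graph V E" and "u \<noteq> v"
  shows "card {e \<in> E. u \<in> e \<and> v \<in> e} = (if {u, v} \<in> E then 1 else 0)"
proof -
  have "e = {u, v}" if "e \<in> E" "u \<in> e" "v \<in> e" for e
    by (rule simple_graph_edgeE[OF G that(1)]) (use that assms(2) in auto)
  hence "{e \<in> E. u \<in> e \<and> v \<in> e} = {e \<in> E. e = {u, v}}" by blast
  also have "\<dots> = (if {u, v} \<in> E then {{u, v}} else {})" by auto
  finally show ?thesis by simp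
qed

lemma vertex_list:
  assumes "finite V"
  shows "distinct (vertex_list V)" and "set (vertex_list V) = V" and "length (vertex_list V) = card V"
proof -
  have "\<exists>xs. distinct xs \<and> set xs = V" using finite_distinct_list[OF assms] by blast
  hence "distinct (vertex_list V) \<and> set (vertex_list V) = V"
    unfolding vertex_list_def by (rule someI_ex)
  thus "distinct (vertex_list V)" "set (vertex_list V) = V" "length (vertex_list V) = card V"
    using distinct_card by fastforce+
qed

definition norm_laplacian_entry :: "'a set \<Rightarrow> 'a set set \<Rightarrow> 'a \<Rightarrow> 'a \<Rightarrow> real" where
  "norm_laplacian_entry V E u v = (if u = v then 1 else 0)
     - (if {u, v} \<in> E \<and> u \<noteq> v then 1 else 0) / sqrt (real (degree V E u) * real (degree V E v))"

lemma norm_laplacian_enum_mat: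
  assumes "finite V"
  shows "norm_laplacian V E = enum_mat (vertex_list V) (vertex_list V) (norm_laplacian_entry V E)"
  unfolding norm_laplacian_def Let_def
  by (rule eq_matI) (use vertex_list(1)[OF assms] in \<open>auto simp: norm_laplacian_entry_def nth_eq_iff_index_eq\<close>)

lemma poly_char_poly_norm_laplacian:
  assumes "finite V" and "distinct xs" and "set xs = V"
  shows "poly (char_poly (norm_laplacian V E)) x =
    det (enum_mat xs xs (\<lambda>u v. (if u = v then x else 0) - norm_laplacian_entry V E u v))"
proof -
  let ?ys = "vertex_list V"
  have "x \<cdot>\<^sub>m 1\<^sub>m (length ?ys) - enum_mat ?ys ?ys (norm_laplacian_entry V E) =
      enum_mat ?ys ?ys (\<lambda>u v. (if u = v then x else 0) - norm_laplacian_entry V E u v)"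
    by (rule eq_matI) (use vertex_list(1)[OF assms(1)] in \<open>auto simp: nth_eq_iff_index_eq\<close>)
  hence "poly (char_poly (norm_laplacian V E)) x =
      det (enum_mat ?ys ?ys (\<lambda>u v. (if u = v then x else 0) - norm_laplacian_entry V E u v))"
    by (simp add: norm_laplacian_enum_mat[OF assms(1)] poly_char_poly_det[of _ "length ?ys"])
  also have "\<dots> = det (enum_mat xs xs (\<lambda>u v. (if u = v then x else 0) - norm_laplacian_entry V E u v))"
    using assms vertex_list[OF assms(1)] by (intro det_enum_mat_reindex) auto
  finally show ?thesis .
qed

lemma norm_laplacian_entry_regular:
  assumes G: "simple_graph V E" and "regular V E r" and "u \<in> V" and "v \<in> V"
  shows "norm_laplacian_entry V E u v = (if u = v then 1 else 0) - (if {u, v} \<in> E then 1 else 0) / real r"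
  using assms simple_graph_loop_free[OF G, of u]
  by (cases "u = v") (simp_all add: norm_laplacian_entry_def regular_def)

lemma norm_laplacian_regular_mult_const:
  assumes G: "simple_graph V E" and reg: "regular V E r" and r: "r \<ge> 1"
  shows "norm_laplacian V E * mat (card V) k (\<lambda>_. c) = 0\<^sub>m (card V) k"
proof -
  have fin: "finite V" using simple_graph_finite[OF G] .
  let ?ys = "vertex_list V"
  have row_sum: "(\<Sum>v\<in>V. norm_laplacian_entry V E u v) = 0" if u: "u \<in> V" for u
  proof -
    have "(\<Sum>v\<in>V. if {u, v} \<in> E then 1 else 0 :: real) = real (card {v \<in> V. {v, u} \<in> E})"
      using fin sum_of_bool_eq[OF fin fin, of "\<lambda>v. {u, v} \<in> E"]
      by (simp add: of_bool_def Int_def insert_commute)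
    also have "\<dots> = real r" using reg u by (simp add: regular_def degree_def)
    finally show ?thesis
      using fin u r by (simp add: norm_laplacian_entry_regular[OF G reg u] sum_subtractf
          sum_divide_distrib[symmetric])
  qed
  have "norm_laplacian V E * mat (card V) k (\<lambda>_. c) =
      enum_mat ?ys ?ys (norm_laplacian_entry V E) * enum_mat ?ys [0..<k] (\<lambda>_ _. c)"
    by (simp add: norm_laplacian_enum_mat[OF fin] enum_mat_const vertex_list[OF fin])
  also have "\<dots> = enum_mat ?ys [0..<k] (\<lambda>u _. (\<Sum>v\<in>V. norm_laplacian_entry V E u v) * c)"
    by (simp add: enum_mat_mult vertex_list[OF fin] sum_distrib_right)
  also have "\<dots> = 0\<^sub>m (card V) k"
  proof (rule eq_matI)
    fix i j assume "i < dim_row (0\<^sub>m (card V) k)" "j < dim_col (0\<^sub>m (card V) k)"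
    hence "?ys ! i \<in> V" using vertex_list(2,3)[OF fin] nth_mem by (metis dim_row_mat(1) zero_mat_def)
    thus "enum_mat ?ys [0..<k] (\<lambda>u _. (\<Sum>v\<in>V. norm_laplacian_entry V E u v) * c) $$ (i, j) =
        0\<^sub>m (card V) k $$ (i, j)"
      using \<open>i < dim_row _\<close> \<open>j < dim_col _\<close> by (simp add: row_sum vertex_list[OF fin])
  qed (simp_all add: vertex_list[OF fin])
  finally show ?thesis .
qed

section \<open>The subdivision-vertex join of two regular graphs\<close>

lemma svj_edges_simps:
  "{Inl (Inl u), Inl (Inl v)} \<notin> svj_edges V1 E1 V2 E2"
  "{Inl (Inl u), Inl (Inr e)} \<in> svj_edges V1 E1 V2 E2 \<longleftrightarrow> e \<in> E1 \<and> u \<in> e"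
  "{Inl (Inr e), Inl (Inl u)} \<in> svj_edges V1 E1 V2 E2 \<longleftrightarrow> e \<in> E1 \<and> u \<in> e"
  "{Inl (Inl u), Inr w} \<in> svj_edges V1 E1 V2 E2 \<longleftrightarrow> u \<in> V1 \<and> w \<in> V2"
  "{Inr w, Inl (Inl u)} \<in> svj_edges V1 E1 V2 E2 \<longleftrightarrow> u \<in> V1 \<and> w \<in> V2"
  "{Inl (Inr e), Inl (Inr f)} \<notin> svj_edges V1 E1 V2 E2"
  "{Inl (Inr e), Inr w} \<notin> svj_edges V1 E1 V2 E2"
  "{Inr w, Inl (Inr e)} \<notin> svj_edges V1 E1 V2 E2"
  "{Inr w, Inr z} \<in> svj_edges V1 E1 V2 E2 \<longleftrightarrow> {w, z} \<in> E2"
  unfolding svj_edges_def by (auto simp: doubleton_eq_iff insert_commute)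

lemma svj_quadratic_identity:
  fixes y r1 r2 n1 n2 d1 d2 s t :: real
  assumes d1: "d1 = r1 + n2" "d1 \<noteq> 0" and d2: "d2 = r2 + n1" "d2 \<noteq> 0" and y: "y \<noteq> 0"
    and s: "s = y - r1 / (d1 * y)" "s \<noteq> 0" and t: "t = y + r2 / d2" "t \<noteq> 0"
  shows "y * s * (1 - n1 * n2 / (d1 * d2 * s * t)) * t
    = (y + 1) * ((y + 1) ^ 2 - (2 + n1 / d2) * (y + 1) + (2 * n1 / d2 + n2 * r2 / (d1 * d2)))"
proof -
  define p where "p = n2 / d1"
  define q where "q = n1 / d2"
  have "y * s = y\<^sup>2 - r1 / d1" using d1(2) y by (simp add: s(1) field_simps power2_eq_square)
  moreover have "r1 / d1 = 1 - p" using d1 by (simp add: p_def field_simps)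
  ultimately have ys: "y * s = y\<^sup>2 - 1 + p" by simp
  have t': "t = y + 1 - q"
    using d2 by (simp add: t q_def field_simps)
  have "y * s * (1 - n1 * n2 / (d1 * d2 * s * t)) * t = (y * s) * t - y * (p * q)"
    using d1(2) d2(2) s(2) t(2) by (simp add: field_simps p_def q_def)
  also have "\<dots> = (y\<^sup>2 - 1 + p) * (y + 1 - q) - y * (p * q)"
    by (simp only: ys t')
  also have "\<dots> = (y + 1) * ((y + 1)\<^sup>2 - (2 + q) * (y + 1) + (2 * q + p * (1 - q)))"
    by (simp add: power2_eq_square algebra_simps)
  also have "p * (1 - q) = n2 * r2 / (d1 * d2)"
    using d1 d2 by (simp add: p_def q_def field_simps)
  finally show ?thesis by (simp add: q_def)
qed

locale regular_svj =
  fixes V1 :: "'a set" and E1 :: "'a set set" and V2 :: "'b set" and E2 :: "'b set set"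
    and r1 r2 :: nat
  assumes G1: "simple_graph V1 E1" and G2: "simple_graph V2 E2"
    and reg1: "regular V1 E1 r1" and r1: "r1 \<ge> 1"
    and reg2: "regular V2 E2 r2" and r2: "r2 \<ge> 1"
begin

abbreviation "n1 \<equiv> card V1"
abbreviation "n2 \<equiv> card V2"
abbreviation "m1 \<equiv> card E1"
abbreviation "Vs \<equiv> svj_vertices V1 E1 V2"
abbreviation "Es \<equiv> svj_edges V1 E1 V2 E2"

text \<open>The degrees in the join of the vertices of \<open>V1\<close> and of \<open>V2\<close>.\<close>
definition "d1 = real r1 + real n2"
definition "d2 = real r2 + real n1"

lemma d1_pos: "d1 > 0" and d2_pos: "d2 > 0"
  using r1 r2 by (simp_all add: d1_def d2_def)

text \<open>The coefficients of the diagonal blocks in \<open>svj_schur_complement\<close>.\<close>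
definition "\<sigma> x = x - 1 - real r1 / (d1 * (x - 1))"
definition "\<alpha> x = real r1 / (2 * d1 * (x - 1))"
definition "\<tau> x = x - 1 + real r2 / d2"
definition "\<beta> = - real r2 / d2"

lemma finite_V1: "finite V1" and finite_V2: "finite V2" and finite_E1: "finite E1"
  using G1 G2 by (simp_all add: simple_graph_finite simple_graph_finite_edges)

lemma degree_svj_V1:
  assumes u: "u \<in> V1" shows "degree Vs Es (Inl (Inl u)) = r1 + n2"
proof -
  have nbrs: "{q \<in> Vs. {q, Inl (Inl u)} \<in> Es} = (Inl \<circ> Inr) ` {e \<in> E1. u \<in> e} \<union> Inr ` V2"
    using u by (auto simp: svj_vertices_def svj_edges_simps)
  have "card {e \<in> E1. u \<in> e} = r1"
    using card_incident_edges[OF G1] reg1 u by (simp add: regular_def)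
  thus ?thesis
    unfolding degree_def nbrs using finite_E1 finite_V2
    by (subst card_Un_disjoint) (auto simp: card_image inj_on_def)
qed

lemma degree_svj_E1:
  assumes e: "e \<in> E1" shows "degree Vs Es (Inl (Inr e)) = 2"
proof -
  obtain u v where "u \<noteq> v" "e = {u, v}" "u \<in> V1" "v \<in> V1"
    using simple_graph_edgeE[OF G1 e] .
  moreover have "{q \<in> Vs. {q, Inl (Inr e)} \<in> Es} = (Inl \<circ> Inl) ` e"
    using e calculation by (auto simp: svj_vertices_def svj_edges_simps)
  ultimately show ?thesis unfolding degree_def by auto
qed

lemma degree_svj_V2:
  assumes w: "w \<in> V2" shows "degree Vs Es (Inr w) = r2 + n1"
proof -
  have nbrs: "{q \<in> Vs. {q, Inr w} \<in> Es} = Inr ` {z \<in> V2. {z, w} \<in> E2} \<union> (Inl \<circ> Inl) ` V1"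
    using w by (auto simp: svj_vertices_def svj_edges_simps elim: simple_graph_edgeE[OF G2])
  have "card {z \<in> V2. {z, w} \<in> E2} = r2"
    using reg2 w by (simp add: regular_def degree_def)
  thus ?thesis
    unfolding degree_def nbrs using finite_V1 finite_V2
    by (subst card_Un_disjoint) (auto simp: card_image inj_on_def)
qed

definition char_entry :: "real \<Rightarrow> ('a + 'a set) + 'b \<Rightarrow> ('a + 'a set) + 'b \<Rightarrow> real" where
  "char_entry x p q = (if p = q then x else 0) - norm_laplacian_entry Vs Es p q"

lemma char_entry_V1_V1: "char_entry x (Inl (Inl u)) (Inl (Inl v)) = (if u = v then x - 1 else 0)"
  and char_entry_E1_E1: "char_entry x (Inl (Inr e)) (Inl (Inr f)) = (if e = f then x - 1 else 0)"
  and char_entry_E1_V2: "char_entry x (Inl (Inr e)) (Inr w) = 0"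
  and char_entry_V2_E1: "char_entry x (Inr w) (Inl (Inr e)) = 0"
  by (simp_all add: char_entry_def norm_laplacian_entry_def svj_edges_simps)

lemma char_entry_V1_E1:
  "u \<in> V1 \<Longrightarrow> e \<in> E1 \<Longrightarrow> char_entry x (Inl (Inl u)) (Inl (Inr e)) = (if u \<in> e then 1 else 0) / sqrt (2 * d1)"
  and char_entry_E1_V1:
  "u \<in> V1 \<Longrightarrow> e \<in> E1 \<Longrightarrow> char_entry x (Inl (Inr e)) (Inl (Inl u)) = (if u \<in> e then 1 else 0) / sqrt (2 * d1)"
  by (simp_all add: char_entry_def norm_laplacian_entry_def svj_edges_simps degree_svj_V1 degree_svj_E1
      d1_def mult.commute)

lemma char_entry_V1_V2:
  "u \<in> V1 \<Longrightarrow> w \<in> V2 \<Longrightarrow> char_entry x (Inl (Inl u)) (Inr w) = 1 / sqrt (d1 * d2)"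
  and char_entry_V2_V1:
  "u \<in> V1 \<Longrightarrow> w \<in> V2 \<Longrightarrow> char_entry x (Inr w) (Inl (Inl u)) = 1 / sqrt (d1 * d2)"
  by (simp_all add: char_entry_def norm_laplacian_entry_def svj_edges_simps degree_svj_V1 degree_svj_V2
      d1_def d2_def mult.commute)

lemma char_entry_V2_V2:
  assumes "w \<in> V2" and "z \<in> V2"
  shows "char_entry x (Inr w) (Inr z) = (if w = z then x - 1 else 0) + (if {w, z} \<in> E2 then 1 else 0) / d2"
  using assms simple_graph_loop_free[OF G2, of w]
  by (cases "w = z") (simp_all add: char_entry_def norm_laplacian_entry_def svj_edges_simps degree_svj_V2 d2_def)

abbreviation "us \<equiv> vertex_list V1"
abbreviation "ws \<equiv> vertex_list V2"
abbreviation "es \<equiv> vertex_list E1"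
abbreviation vs :: "(('a + 'a set) + 'b) list" where "vs \<equiv> map (Inl \<circ> Inl) us @ map Inr ws"

lemma enum_V1: "distinct us" "set us = V1" "length us = n1"
  and enum_V2: "distinct ws" "set ws = V2" "length ws = n2"
  and enum_E1: "distinct es" "set es = E1" "length es = m1"
  using vertex_list finite_V1 finite_V2 finite_E1 by auto

lemma poly_char_poly_svj:
  "poly (char_poly (norm_laplacian Vs Es)) x =
     det (four_block_mat ((x - 1) \<cdot>\<^sub>m 1\<^sub>m m1)
       (enum_mat es vs (\<lambda>e. char_entry x (Inl (Inr e))))
       (enum_mat vs es (\<lambda>p e. char_entry x p (Inl (Inr e))))
       (enum_mat vs vs (char_entry x)))"
proof -
  let ?zs = "map (Inl \<circ> Inr) es @ vs"
  have "finite Vs" using finite_V1 finite_V2 finite_E1 by (simp add: svj_vertices_def)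
  moreover have "distinct ?zs" and "set ?zs = Vs"
    using enum_V1 enum_V2 enum_E1 by (auto simp: distinct_map inj_on_def svj_vertices_def)
  ultimately have "poly (char_poly (norm_laplacian Vs Es)) x = det (enum_mat ?zs ?zs (char_entry x))"
    unfolding char_entry_def by (rule poly_char_poly_norm_laplacian)
  moreover have "enum_mat es es (\<lambda>e f. char_entry x (Inl (Inr e)) (Inl (Inr f))) = (x - 1) \<cdot>\<^sub>m 1\<^sub>m m1"
    using enum_E1 by (subst enum_mat_diag) (simp_all add: char_entry_E1_E1)
  ultimately show ?thesis
    by (simp add: enum_mat_append[of "map (Inl \<circ> Inr) es" vs] enum_mat_map_rows enum_mat_map_cols)
qed

text \<open>Eliminating the subdivision vertices produces \<open>R R\<^sup>T = A1 + r1 I\<close>, where \<open>R\<close> is the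
  vertex-edge incidence matrix of \<open>G1\<close>.\<close>

lemma sum_char_entry_E1:
  assumes u: "u \<in> V1" and v: "v \<in> V1"
  shows "(\<Sum>e\<in>E1. char_entry x (Inl (Inl u)) (Inl (Inr e)) * char_entry x (Inl (Inr e)) (Inl (Inl v))) =
    (if u = v then real r1 else if {u, v} \<in> E1 then 1 else 0) / (2 * d1)"
proof -
  have "(\<Sum>e\<in>E1. char_entry x (Inl (Inl u)) (Inl (Inr e)) * char_entry x (Inl (Inr e)) (Inl (Inl v))) =
      (\<Sum>e\<in>E1. if u \<in> e \<and> v \<in> e then 1 / (2 * d1) else 0)"
    using d1_pos by (intro sum.cong) (simp_all add: u v char_entry_V1_E1 char_entry_E1_V1)
  also have "\<dots> = real (card {e \<in> E1. u \<in> e \<and> v \<in> e}) / (2 * d1)"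
    using finite_E1 by (simp add: sum.If_cases Int_def)
  also have "card {e \<in> E1. u \<in> e \<and> v \<in> e} = (if u = v then r1 else if {u, v} \<in> E1 then 1 else 0)"
    using card_incident_edges[OF G1, of u] card_common_edges[OF G1, of u v] reg1 u
    by (cases "u = v") (simp_all add: regular_def)
  finally show ?thesis by simp
qed

definition schur_entry :: "real \<Rightarrow> ('a + 'a set) + 'b \<Rightarrow> ('a + 'a set) + 'b \<Rightarrow> real" where
  "schur_entry x p q = char_entry x p q
     - (\<Sum>e\<in>E1. char_entry x p (Inl (Inr e)) * char_entry x (Inl (Inr e)) q) / (x - 1)"

lemma schur_entry_V1_V1:
  assumes x: "x \<noteq> 1" and u: "u \<in> V1" and v: "v \<in> V1"
  shows "schur_entry x (Inl (Inl u)) (Inl (Inl v)) =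
    (if u = v then \<sigma> x else 0) + \<alpha> x * norm_laplacian_entry V1 E1 u v"
proof (cases "u = v")
  case True
  have "real r1 / (d1 * (x - 1)) = 2 * (real r1 / (2 * d1 * (x - 1)))" by simp
  thus ?thesis
    using True r1 u simple_graph_loop_free[OF G1, of v]
    by (simp add: schur_entry_def char_entry_V1_V1 sum_char_entry_E1 norm_laplacian_entry_regular[OF G1 reg1]
        \<sigma>_def \<alpha>_def)
next
  case False
  thus ?thesis
    using x r1 u v d1_pos
    by (simp add: schur_entry_def char_entry_V1_V1 sum_char_entry_E1 norm_laplacian_entry_regular[OF G1 reg1]
        \<alpha>_def)
qed

lemma schur_entry_V2_V2:
  assumes w: "w \<in> V2" and z: "z \<in> V2"
  shows "schur_entry x (Inr w) (Inr z) = (if w = z then \<tau> x else 0) + \<beta> * norm_laplacian_entry V2 E2 w z"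
  using r2 d2_pos w z
  by (cases "w = z") (simp_all add: schur_entry_def char_entry_V2_V2 char_entry_V2_E1
      norm_laplacian_entry_regular[OF G2 reg2] \<tau>_def \<beta>_def field_simps)

lemma schur_entry_V1_V2: "u \<in> V1 \<Longrightarrow> w \<in> V2 \<Longrightarrow> schur_entry x (Inl (Inl u)) (Inr w) = 1 / sqrt (d1 * d2)"
  and schur_entry_V2_V1: "u \<in> V1 \<Longrightarrow> w \<in> V2 \<Longrightarrow> schur_entry x (Inr w) (Inl (Inl u)) = 1 / sqrt (d1 * d2)"
  by (simp_all add: schur_entry_def char_entry_V1_V2 char_entry_V2_V1 char_entry_E1_V2 char_entry_V2_E1)

lemma svj_schur_complement:
  assumes x: "x \<noteq> 1"
  shows "enum_mat vs vs (char_entry x) - (1 / (x - 1)) \<cdot>\<^sub>m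
      (enum_mat vs es (\<lambda>p e. char_entry x p (Inl (Inr e))) * enum_mat es vs (\<lambda>e. char_entry x (Inl (Inr e))))
    = four_block_mat (\<sigma> x \<cdot>\<^sub>m 1\<^sub>m n1 + \<alpha> x \<cdot>\<^sub>m norm_laplacian V1 E1)
        (mat n1 n2 (\<lambda>_. 1 / sqrt (d1 * d2))) (mat n2 n1 (\<lambda>_. 1 / sqrt (d1 * d2)))
        (\<tau> x \<cdot>\<^sub>m 1\<^sub>m n2 + \<beta> \<cdot>\<^sub>m norm_laplacian V2 E2)"
proof -
  have "enum_mat us us (\<lambda>u v. schur_entry x (Inl (Inl u)) (Inl (Inl v))) =
      \<sigma> x \<cdot>\<^sub>m 1\<^sub>m n1 + \<alpha> x \<cdot>\<^sub>m norm_laplacian V1 E1"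
    unfolding norm_laplacian_enum_mat[OF finite_V1] enum_V1(3)[symmetric]
    by (rule enum_mat_affine[OF enum_V1(1)]) (use x enum_V1 in \<open>simp add: schur_entry_V1_V1\<close>)
  moreover have "enum_mat ws ws (\<lambda>w z. schur_entry x (Inr w) (Inr z)) =
      \<tau> x \<cdot>\<^sub>m 1\<^sub>m n2 + \<beta> \<cdot>\<^sub>m norm_laplacian V2 E2"
    unfolding norm_laplacian_enum_mat[OF finite_V2] enum_V2(3)[symmetric]
    by (rule enum_mat_affine[OF enum_V2(1)]) (use enum_V2 in \<open>simp add: schur_entry_V2_V2\<close>)
  moreover have "enum_mat us ws (\<lambda>u w. schur_entry x (Inl (Inl u)) (Inr w)) = mat n1 n2 (\<lambda>_. 1 / sqrt (d1 * d2))"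
    unfolding enum_V1(3)[symmetric] enum_V2(3)[symmetric]
    by (rule enum_mat_const) (use enum_V1 enum_V2 in \<open>simp add: schur_entry_V1_V2\<close>)
  moreover have "enum_mat ws us (\<lambda>w u. schur_entry x (Inr w) (Inl (Inl u))) = mat n2 n1 (\<lambda>_. 1 / sqrt (d1 * d2))"
    unfolding enum_V1(3)[symmetric] enum_V2(3)[symmetric]
    by (rule enum_mat_const) (use enum_V1 enum_V2 in \<open>simp add: schur_entry_V2_V1\<close>)
  moreover have "enum_mat vs vs (char_entry x) - (1 / (x - 1)) \<cdot>\<^sub>m
      (enum_mat vs es (\<lambda>p e. char_entry x p (Inl (Inr e))) * enum_mat es vs (\<lambda>e. char_entry x (Inl (Inr e))))
      = enum_mat vs vs (schur_entry x)"
    by (simp add: enum_mat_mult enum_E1 enum_mat_diff_smult schur_entry_def[abs_def])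
  ultimately show ?thesis
    by (simp add: enum_mat_append enum_mat_map_rows enum_mat_map_cols)
qed

lemma svj_schur_coefficients_pos:
  assumes x: "x > 2"
  shows "\<sigma> x > 0" and "\<tau> x > 0"
proof -
  have "real r1 \<le> d1" by (simp add: d1_def)
  also have "d1 < d1 * (x - 1)" using x d1_pos by simp
  finally have "real r1 / (d1 * (x - 1)) < 1" using x d1_pos by simp
  thus "\<sigma> x > 0" using x by (simp add: \<sigma>_def)
  have "real r2 / d2 \<ge> 0" using d2_pos by simp
  thus "\<tau> x > 0" using x by (simp add: \<tau>_def)
qed

lemma poly_char_poly_svj_factor:
  assumes x: "x > 2"
    and mu: "char_poly (norm_laplacian V1 E1) = (\<Prod>i<n1. [:- \<mu> i, 1:])"
    and nu: "char_poly (norm_laplacian V2 E2) = (\<Prod>i<n2. [:- \<nu> i, 1:])"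
  shows "poly (char_poly (norm_laplacian Vs Es)) x =
    (x - 1) ^ m1 * (\<Prod>i<n1. \<sigma> x + \<alpha> x * \<mu> i)
    * (1 - real n1 * real n2 / (d1 * d2 * \<sigma> x * \<tau> x)) * (\<Prod>i<n2. \<tau> x + \<beta> * \<nu> i)"
proof -
  have "norm_laplacian V1 E1 \<in> carrier_mat (length us) (length us)"
    and "norm_laplacian V2 E2 \<in> carrier_mat (length ws) (length ws)"
    by (simp_all add: norm_laplacian_enum_mat finite_V1 finite_V2)
  hence L1: "norm_laplacian V1 E1 \<in> carrier_mat n1 n1" and L2: "norm_laplacian V2 E2 \<in> carrier_mat n2 n2"
    by (simp_all only: enum_V1(3) enum_V2(3))
  have \<sigma>: "\<sigma> x \<noteq> 0" and \<tau>: "\<tau> x \<noteq> 0"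
    using svj_schur_coefficients_pos[OF x] by simp_all
  have \<alpha>: "\<alpha> x \<noteq> 0" and \<beta>: "\<beta> \<noteq> 0"
    using x r1 r2 d1_pos d2_pos by (simp_all add: \<alpha>_def \<beta>_def)
  have c: "(1 / sqrt (d1 * d2)) ^ 2 = 1 / (d1 * d2)"
    using d1_pos d2_pos by (simp add: power_divide)
  let ?B = "enum_mat es vs (\<lambda>e. char_entry x (Inl (Inr e)))"
  let ?C = "enum_mat vs es (\<lambda>p e. char_entry x p (Inl (Inr e)))"
  have B: "?B \<in> carrier_mat m1 (length vs)"
    using enum_mat_carrier[of es vs] unfolding enum_E1(3) .
  hence "(x - 1) \<cdot>\<^sub>m 1\<^sub>m m1 * ?B = (x - 1) \<cdot>\<^sub>m ?B"
    by (simp only: mult_smult_assoc_mat[OF one_carrier_mat B] left_mult_one_mat[OF B])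
  hence "poly (char_poly (norm_laplacian Vs Es)) x
      = (x - 1) ^ m1 * det (enum_mat vs vs (char_entry x) - (1 / (x - 1)) \<cdot>\<^sub>m (?C * ?B))"
    unfolding poly_char_poly_svj
    using x B by (subst det_four_block_mat_eigen[of _ m1 _ "length vs"]) (auto simp: enum_E1(3))
  also have "enum_mat vs vs (char_entry x) - (1 / (x - 1)) \<cdot>\<^sub>m (?C * ?B) =
      four_block_mat (\<sigma> x \<cdot>\<^sub>m 1\<^sub>m n1 + \<alpha> x \<cdot>\<^sub>m norm_laplacian V1 E1)
        (mat n1 n2 (\<lambda>_. 1 / sqrt (d1 * d2))) (mat n2 n1 (\<lambda>_. 1 / sqrt (d1 * d2)))
        (\<tau> x \<cdot>\<^sub>m 1\<^sub>m n2 + \<beta> \<cdot>\<^sub>m norm_laplacian V2 E2)"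
    using x by (intro svj_schur_complement) simp
  also have "det \<dots> = det (\<sigma> x \<cdot>\<^sub>m 1\<^sub>m n1 + \<alpha> x \<cdot>\<^sub>m norm_laplacian V1 E1)
      * (1 - real n1 * real n2 * (1 / sqrt (d1 * d2)) ^ 2 / (\<sigma> x * \<tau> x))
      * det (\<tau> x \<cdot>\<^sub>m 1\<^sub>m n2 + \<beta> \<cdot>\<^sub>m norm_laplacian V2 E2)"
    by (intro det_four_block_mat_const_off_diagonal L1 L2 \<sigma> \<tau>
        norm_laplacian_regular_mult_const[OF G1 reg1 r1] norm_laplacian_regular_mult_const[OF G2 reg2 r2])
  also have "det (\<sigma> x \<cdot>\<^sub>m 1\<^sub>m n1 + \<alpha> x \<cdot>\<^sub>m norm_laplacian V1 E1) = (\<Prod>i<n1. \<sigma> x + \<alpha> x * \<mu> i)"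
    by (rule det_affine_char_poly[OF L1 mu \<alpha>])
  also have "det (\<tau> x \<cdot>\<^sub>m 1\<^sub>m n2 + \<beta> \<cdot>\<^sub>m norm_laplacian V2 E2) = (\<Prod>i<n2. \<tau> x + \<beta> * \<nu> i)"
    by (rule det_affine_char_poly[OF L2 nu \<beta>])
  finally show ?thesis by (simp add: c mult.assoc)
qed

lemma prod_V1_block_eigenvalues:
  assumes x: "x > 2" and n1: "0 < n1" and mu0: "\<mu> 0 = 0"
  shows "(\<Prod>i<n1. \<sigma> x + \<alpha> x * \<mu> i) =
    \<sigma> x * (\<Prod>i\<in>{1..<n1}. (x - 1) ^ 2 - real r1 * (2 - \<mu> i) / (2 * d1)) / (x - 1) ^ (n1 - 1)"
proof -
  define y where "y = x - 1"
  have \<sigma>\<alpha>: "\<sigma> x = y - real r1 / (d1 * y)" "\<alpha> x = real r1 / (2 * d1 * y)"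
    by (simp_all add: \<sigma>_def \<alpha>_def y_def)
  have "y > 1" using x by (simp add: y_def)
  hence "\<sigma> x + \<alpha> x * \<mu> i = (y ^ 2 - real r1 * (2 - \<mu> i) / (2 * d1)) / y" for i
    using d1_pos by (simp add: \<sigma>\<alpha> field_simps power2_eq_square)
  hence "(\<Prod>i\<in>{1..<n1}. \<sigma> x + \<alpha> x * \<mu> i) =
      (\<Prod>i\<in>{1..<n1}. y ^ 2 - real r1 * (2 - \<mu> i) / (2 * d1)) / y ^ (n1 - 1)"
    by (simp add: prod_dividef)
  thus ?thesis using n1 mu0 by (simp add: lessThan_atLeast0 prod.atLeast_Suc_lessThan y_def)
qed

lemma prod_V2_block_eigenvalues:
  assumes n2: "0 < n2" and nu0: "\<nu> 0 = 0"
  shows "(\<Prod>i<n2. \<tau> x + \<beta> * \<nu> i) = \<tau> x * (\<Prod>i\<in>{1..<n2}. x - (real n1 + real r2 * \<nu> i) / d2)"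
proof -
  have "1 - real r2 / d2 = real n1 / d2" using d2_pos by (simp add: d2_def field_simps)
  hence "\<tau> x + \<beta> * \<nu> i = x - (real n1 + real r2 * \<nu> i) / d2" for i
    by (simp add: \<tau>_def \<beta>_def diff_divide_distrib add_divide_distrib algebra_simps)
  hence "(\<Prod>i\<in>{1..<n2}. \<tau> x + \<beta> * \<nu> i) = (\<Prod>i\<in>{1..<n2}. x - (real n1 + real r2 * \<nu> i) / d2)"
    by simp
  thus ?thesis using n2 nu0 by (simp add: lessThan_atLeast0 prod.atLeast_Suc_lessThan)
qed

lemma svj_quadratic_factor:
  assumes x: "x > 2"
  shows "(x - 1) * \<sigma> x * (1 - real n1 * real n2 / (d1 * d2 * \<sigma> x * \<tau> x)) * \<tau> x =
    x * (x ^ 2 - (2 + real n1 / d2) * x + (2 * real n1 / d2 + real n2 * real r2 / (d1 * d2)))"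
  using svj_quadratic_identity[OF d1_def _ d2_def _ _ _ _ _ _, of "x - 1" "\<sigma> x" "\<tau> x"]
    svj_schur_coefficients_pos[OF x] x d1_pos d2_pos
  by (simp add: \<sigma>_def \<tau>_def)

lemma poly_char_poly_svj_closed_form:
  assumes x: "x > 2" and ne1: "V1 \<noteq> {}" and ne2: "V2 \<noteq> {}"
    and mu0: "\<mu> 0 = 0" and mu: "char_poly (norm_laplacian V1 E1) = (\<Prod>i<n1. [:- \<mu> i, 1:])"
    and nu0: "\<nu> 0 = 0" and nu: "char_poly (norm_laplacian V2 E2) = (\<Prod>i<n2. [:- \<nu> i, 1:])"
  shows "poly (char_poly (norm_laplacian Vs Es)) x * (x - 1) ^ (n1 - m1) =
    x * (x - 1) ^ (m1 - n1)
    * (x ^ 2 - (2 + real n1 / d2) * x + (2 * real n1 / d2 + real n2 * real r2 / (d1 * d2)))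
    * (\<Prod>i\<in>{1..<n1}. (x - 1) ^ 2 - real r1 * (2 - \<mu> i) / (2 * d1))
    * (\<Prod>i\<in>{1..<n2}. x - (real n1 + real r2 * \<nu> i) / d2)"
proof -
  have n1: "0 < n1" and n2: "0 < n2"
    using ne1 ne2 finite_V1 finite_V2 by (simp_all add: card_gt_0_iff)
  define y where "y = x - 1"
  define F where "F = (\<Prod>i\<in>{1..<n1}. y ^ 2 - real r1 * (2 - \<mu> i) / (2 * d1))"
  define G where "G = (\<Prod>i\<in>{1..<n2}. x - (real n1 + real r2 * \<nu> i) / d2)"
  define k where "k = 1 - real n1 * real n2 / (d1 * d2 * \<sigma> x * \<tau> x)"
  have "y > 1" using x by (simp add: y_def)
  have "m1 + (n1 - m1) = (m1 - n1) + (n1 - 1) + 1" using n1 by arith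
  hence pow: "y ^ m1 * y ^ (n1 - m1) = y ^ (m1 - n1) * y ^ (n1 - 1) * y"
    by (metis power_add power_one_right)
  have "poly (char_poly (norm_laplacian Vs Es)) x * y ^ (n1 - m1) =
      y ^ m1 * y ^ (n1 - m1) * (\<sigma> x * F / y ^ (n1 - 1)) * k * (\<tau> x * G)"
    using prod_V1_block_eigenvalues[where \<mu> = \<mu>, OF x n1 mu0] prod_V2_block_eigenvalues[where \<nu> = \<nu>, OF n2 nu0]
    by (simp add: poly_char_poly_svj_factor[OF x mu nu] y_def F_def G_def k_def)
  also have "\<dots> = y ^ (m1 - n1) * (y * \<sigma> x * k * \<tau> x) * F * G"
    using \<open>y > 1\<close> unfolding pow by (simp add: field_simps)
  also have "y * \<sigma> x * k * \<tau> x =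
      x * (x ^ 2 - (2 + real n1 / d2) * x + (2 * real n1 / d2 + real n2 * real r2 / (d1 * d2)))"
    unfolding y_def k_def by (rule svj_quadratic_factor[OF x])
  finally show ?thesis unfolding F_def G_def y_def by (simp add: ac_simps)
qed

end

theorem theorem2p3:
  fixes V1 :: "'a set" and E1 :: "'a set set" and V2 :: "'b set" and E2 :: "'b set set"
    and r1 r2 :: nat and \<mu> \<nu> :: "nat \<Rightarrow> real"
  assumes g1: "simple_graph V1 E1" and g2: "simple_graph V2 E2"
    and ne1: "V1 \<noteq> {}" and ne2: "V2 \<noteq> {}"
    and reg1: "regular V1 E1 r1" and r1: "r1 \<ge> 1"
    and reg2: "regular V2 E2 r2" and r2: "r2 \<ge> 1"
    and mu0: "\<mu> 0 = 0"
    and mu: "char_poly (norm_laplacian V1 E1) = (\<Prod>i<card V1. [:- \<mu> i, 1:])"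
    and nu0: "\<nu> 0 = 0"
    and nu: "char_poly (norm_laplacian V2 E2) = (\<Prod>i<card V2. [:- \<nu> i, 1:])"
  shows
    "(let n1 = card V1; n2 = card V2; m1 = card E1 in
      char_poly (norm_laplacian (svj_vertices V1 E1 V2) (svj_edges V1 E1 V2 E2))
        * [:-1, 1:] ^ (n1 - m1)
      = [:0, 1:] * [:-1, 1:] ^ (m1 - n1)
        * ([:0, 1:] ^ 2 - [:0, 2 + real n1 / (real r2 + real n1):]
           + [: 2 * real n1 / (real r2 + real n1)
                + real n2 * real r2 / ((real r1 + real n2) * (real r2 + real n1)) :])
        * (\<Prod>i\<in>{1..<n1}. [:-1, 1:] ^ 2
             - [: real r1 * (2 - \<mu> i) / (2 * (real r1 + real n2)) :])
        * (\<Prod>i\<in>{1..<n2}. [:- ((real n1 + real r2 * \<nu> i) / (real r2 + real n1)), 1:]))"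
proof -
  interpret regular_svj V1 E1 V2 E2 r1 r2
    by unfold_locales fact+
  show ?thesis
    unfolding Let_def
    by (rule poly_eqI_greater[of 2], drule poly_char_poly_svj_closed_form[OF _ ne1 ne2 mu0 mu nu0 nu])
      (simp add: poly_prod d1_def d2_def algebra_simps)
qed

end
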